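(* Let $\mathbf{Z}=\{\mathbf{z}_i\}_{i=1}^n$ be a $G$-networked sample and let $\xi$ be a function on $\mathcal{Z}$ with mean $\mathbf{E}(\xi)=\mu$, variance $\sigma^2(\xi)=\sigma^2$, and satisfying $|\xi(\mathbf{z})-\mu|\le M$ for $\rho$-almost all $\mathbf{z}\in\mathcal{Z}$. If $\mathbf{w}$ is an optimal weighting of $G$ and $\mathsf{s}=\mathsf{s}(G)$, then for all $\epsilon>0$, $$\Pr\Big(\frac{1}{\mathsf{s}}\sum_{i=1}^n w_i\,\xi(\mathbf{z}_i)-\mu\ge\epsilon\Big)\le\exp\Big(-\frac{\mathsf{s}\,\epsilon^2}{2(\sigma^2+\frac13 M\epsilon)}\Big).$$
   Context: Networked setting: $G$ is a $k$-partite hypergraph with hyperedges $e_1,\dots,e_n$; its vertex set is partitioned into $V^{(1)},\dots,V^{(k)}$ and each hyperedge contains exactly one vertex $e^{(j)}$ of each $V^{(j)}$. $\mathcal{X}=\mathcal{X}^{(1)}\times\cdots\times\mathcal{X}^{(k)}$ (compact metric spaces), $\mathcal{Y}=\mathbb{R}$, $\mathcal{Z}=\mathcal{X}\times\mathcal{Y}$. Each vertex $v\in V^{(j)}$ gets a feature $\phi(v)\in\mathcal{X}^{(j)}$ drawn independently from $\rho_j$, independently of the hypergraph. Hyperedge $e_i$ yields $\mathbf{z}_i=(\mathbf{x}_i,y_i)$, $\mathbf{x}_i=(\phi(e_i^{(1)}),\dots,\phi(e_i^{(k)}))$, with labels conditionally independent given all features, $y_i\sim\rho_{y|\mathbf{x}}(\cdot\mid\mathbf{x}_i)$.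 $\rho=\rho_{y|\mathbf{x}}\rho_{\mathbf{x}}$ with $\rho_{\mathbf{x}}=\prod_j\rho_j$; mean and variance of $\xi$ are with respect to $\rho$. $\mathbf{Z}$ is the $G$-networked sample. A feasible weighting is $\mathbf{w}=(w_1,\dots,w_n)$ with $w_i\ge0$ and $\sum_{i:\,v\in e_i}w_i\le1$ for every vertex $v$. $\mathsf{s}(G)$ is the maximum of $\sum_i w_i$ over feasible weightings, and an optimal weighting is a feasible weighting attaining this maximum. *)

theory Defs
  imports "HOL-Probability.Probability"
begin

text \<open>
  Vertices of part j (j < k) form the finite set V j of
  vertex names of type 'v; a vertex of G is a pair (j, v) with v in V j.
  The hyperedges are e 0, ..., e (n-1); hyperedge e i contains exactly the
  vertex (j, e i j) of part j, for every j < k.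
\<close>

definition k_partite_hypergraph ::
  "nat \<Rightarrow> (nat \<Rightarrow> 'v set) \<Rightarrow> nat \<Rightarrow> (nat \<Rightarrow> nat \<Rightarrow> 'v) \<Rightarrow> bool" where
  "k_partite_hypergraph k V n e \<longleftrightarrow>
     (\<forall>j<k. finite (V j)) \<and>
     (\<forall>i<n. \<forall>j<k. e i j \<in> V j) \<and>
     (\<forall>i<n. \<forall>i'<n. i \<noteq> i' \<longrightarrow> (\<exists>j<k. e i j \<noteq> e i' j))"

definition feasible_weighting ::
  "nat \<Rightarrow> (nat \<Rightarrow> 'v set) \<Rightarrow> nat \<Rightarrow> (nat \<Rightarrow> nat \<Rightarrow> 'v) \<Rightarrow> (nat \<Rightarrow> real) \<Rightarrow> bool" where
  "feasible_weighting k V n e w \<longleftrightarrow>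
     (\<forall>i<n. 0 \<le> w i) \<and>
     (\<forall>j<k. \<forall>v\<in>V j. (\<Sum>i\<in>{i. i < n \<and> e i j = v}. w i) \<le> 1)"

definition s_G ::
  "nat \<Rightarrow> (nat \<Rightarrow> 'v set) \<Rightarrow> nat \<Rightarrow> (nat \<Rightarrow> nat \<Rightarrow> 'v) \<Rightarrow> real" where
  "s_G k V n e = Sup {(\<Sum>i<n. w i) | w. feasible_weighting k V n e w}"

definition optimal_weighting ::
  "nat \<Rightarrow> (nat \<Rightarrow> 'v set) \<Rightarrow> nat \<Rightarrow> (nat \<Rightarrow> nat \<Rightarrow> 'v) \<Rightarrow> (nat \<Rightarrow> real) \<Rightarrow> bool" where
  "optimal_weighting k V n e w \<longleftrightarrow>
     feasible_weighting k V n e w \<and> (\<Sum>i<n. w i) = s_G k V n e"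

definition X_space :: "nat \<Rightarrow> (nat \<Rightarrow> 'x measure) \<Rightarrow> (nat \<Rightarrow> 'x) measure" where
  "X_space k \<rho>j = PiM {..<k} \<rho>j"

definition Z_space :: "nat \<Rightarrow> (nat \<Rightarrow> 'x measure) \<Rightarrow> ((nat \<Rightarrow> 'x) \<times> real) measure" where
  "Z_space k \<rho>j = X_space k \<rho>j \<Otimes>\<^sub>M borel"

text \<open>rho = rho_{y|x} rho_x, with rho_x the product of the rho_j and
  K x = rho_{y|x}(. | x) a Markov kernel.\<close>

definition rho_joint ::
  "nat \<Rightarrow> (nat \<Rightarrow> 'x measure) \<Rightarrow> ((nat \<Rightarrow> 'x) \<Rightarrow> real measure) \<Rightarrow> ((nat \<Rightarrow> 'x) \<times> real) measure" where
  "rho_joint k \<rho>j K =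
     X_space k \<rho>j \<bind> (\<lambda>x. distr (K x) (Z_space k \<rho>j) (\<lambda>y. (x, y)))"

definition edge_features ::
  "nat \<Rightarrow> (nat \<Rightarrow> nat \<Rightarrow> 'v) \<Rightarrow> (nat \<times> 'v \<Rightarrow> 'x) \<Rightarrow> nat \<Rightarrow> (nat \<Rightarrow> 'x)" where
  "edge_features k e \<phi> i = (\<lambda>j\<in>{..<k}. \<phi> (j, e i j))"

text \<open>Law of the G-networked sample (z_0, ..., z_(n-1)): the vertex features
  phi(j,v) are independent with law rho_j; given all features, the labels
  are independent with y_i ~ K(x_i).\<close>

definition networked_sample_law ::
  "nat \<Rightarrow> (nat \<Rightarrow> 'v set) \<Rightarrow> nat \<Rightarrow> (nat \<Rightarrow> nat \<Rightarrow> 'v) \<Rightarrow> (nat \<Rightarrow> 'x measure)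
   \<Rightarrow> ((nat \<Rightarrow> 'x) \<Rightarrow> real measure) \<Rightarrow> (nat \<Rightarrow> (nat \<Rightarrow> 'x) \<times> real) measure" where
  "networked_sample_law k V n e \<rho>j K =
     PiM (SIGMA j:{..<k}. V j) (\<lambda>(j, v). \<rho>j j) \<bind>
       (\<lambda>\<phi>. PiM {..<n} (\<lambda>i. distr (K (edge_features k e \<phi> i)) (Z_space k \<rho>j)
                               (\<lambda>y. (edge_features k e \<phi> i, y))))"

end

theory Submission
  imports Defs
begin

text \<open>
  By Chernoff's bound it suffices to control the exponential moment of
  \<open>t \<Sum>i w i (\<xi>(z i) - \<mu>)\<close>. Given the vertex features the labels are independent, so this
  moment is the integral over the features of a product of conditional exponential moments,
  and by Jensen's inequality (each \<open>w i \<le> 1\<close>) the factor of hyperedge i is at most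
  \<open>H(x i) powr w i\<close>, where H is the conditional exponential moment given the feature vector.
  That factor depends only on the features of the vertices of hyperedge i, and feasibility of w
  says that the hyperedges through any vertex carry total weight at most 1: this is exactly the
  hypothesis of Finner's inequality, a fractional Hoelder inequality on product spaces, which
  bounds the integral by \<open>(E H) powr s\<close> with \<open>E H = E exp(t(\<xi> - \<mu>))\<close>. Bernstein's estimate
  \<open>E exp(tY) \<le> exp(t\<^sup>2\<sigma>\<^sup>2 / (2(1 - tM/3)))\<close> at \<open>t = \<epsilon> / (\<sigma>\<^sup>2 + M\<epsilon>/3)\<close> finishes the proof.
\<close>

section \<open>Exponential moments\<close>

lemma two_mult_three_power_le_fact: "2 * 3 ^ n \<le> (fact (n + 2) :: real)"
proof (induction n)
  case 0
  then show ?case by (simp add: numeral_2_eq_2)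
next
  case (Suc n)
  have "fact (Suc n + 2) = real (n + 3) * (fact (n + 2) :: real)"
    by (simp add: numeral_3_eq_3 numeral_2_eq_2 algebra_simps)
  moreover have "(3::real) \<le> real (n + 3)" by simp
  ultimately have "3 * (fact (n + 2) :: real) \<le> fact (Suc n + 2)"
    by (metis fact_ge_zero mult_right_mono)
  moreover have "2 * 3 ^ Suc n = 3 * (2 * (3::real) ^ n)" by simp
  ultimately show ?case using Suc by linarith
qed

lemma exp_le_Bernstein_nonneg:
  fixes t :: real
  assumes "0 \<le> t" "t < 3"
  shows "exp t \<le> 1 + t + t\<^sup>2 / (2 * (1 - t / 3))"
proof -
  have "(\<lambda>n. t ^ n / fact n) sums exp t"
    using exp_converges[of t] by (simp add: divide_inverse mult.commute scaleR_conv_of_real)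
  then have "(\<lambda>n. t ^ (n + 2) / fact (n + 2)) sums (exp t - (\<Sum>i<2. t ^ i / fact i))"
    by (subst sums_iff_shift) simp
  then have tail: "(\<lambda>n. t ^ (n + 2) / fact (n + 2)) sums (exp t - (1 + t))"
    by (simp add: numeral_2_eq_2)
  have geometric: "(\<lambda>n. t\<^sup>2 / 2 * (t / 3) ^ n) sums (t\<^sup>2 / 2 * (1 / (1 - t / 3)))"
    using assms by (intro sums_mult geometric_sums) simp
  have "t ^ (n + 2) / fact (n + 2) \<le> t\<^sup>2 / 2 * (t / 3) ^ n" for n
  proof -
    have "t ^ (n + 2) / fact (n + 2) \<le> t ^ (n + 2) / (2 * 3 ^ n)"
      using assms two_mult_three_power_le_fact[of n] by (intro divide_left_mono) auto
    also have "\<dots> = t\<^sup>2 / 2 * (t / 3) ^ n"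
      by (simp add: power_add power_divide field_simps power2_eq_square)
    finally show ?thesis .
  qed
  from sums_le[OF this tail geometric] show ?thesis by simp
qed

lemma exp_le_quadratic_nonpos:
  fixes t :: real
  assumes "t \<le> 0"
  shows "exp t \<le> 1 + t + t\<^sup>2 / 2"
proof -
  obtain u where u: "exp t = (\<Sum>m<3. t ^ m / fact m) + exp u / fact 3 * t ^ 3"
    using Maclaurin_exp_le[of t 3] by blast
  have "t ^ 3 = t * t\<^sup>2" by (simp add: power3_eq_cube power2_eq_square)
  then have "t ^ 3 \<le> 0"
    using assms by (simp add: mult_nonpos_nonneg)
  then have "exp u / fact 3 * t ^ 3 \<le> 0"
    by (intro mult_nonneg_nonpos) auto
  moreover have "(\<Sum>m<3. t ^ m / fact m) = 1 + t + t\<^sup>2 / 2"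
    by (simp add: numeral_3_eq_3 numeral_2_eq_2 fact_numeral)
  ultimately show ?thesis using u by simp
qed

lemma exp_le_Bernstein:
  fixes t c :: real
  assumes "0 \<le> c" "c < 3" "t \<le> c"
  shows "exp t \<le> 1 + t + t\<^sup>2 / (2 * (1 - c / 3))"
proof (cases "t \<le> 0")
  case True
  have "t\<^sup>2 / 2 \<le> t\<^sup>2 / (2 * (1 - c / 3))"
    using assms by (intro divide_left_mono) auto
  then show ?thesis using exp_le_quadratic_nonpos[OF True] by linarith
next
  case False
  have "t\<^sup>2 / (2 * (1 - t / 3)) \<le> t\<^sup>2 / (2 * (1 - c / 3))"
    using assms False by (intro divide_left_mono) auto
  then show ?thesis using exp_le_Bernstein_nonneg[of t] assms False by linarith
qed

lemma (in finite_measure) integrable_bounded_real: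
  fixes f :: "'a \<Rightarrow> real"
  assumes "f \<in> borel_measurable M" and "\<And>x. x \<in> space M \<Longrightarrow> a \<le> f x \<and> f x \<le> b"
  shows "integrable M f"
proof (rule integrable_const_bound[where B="max \<bar>a\<bar> \<bar>b\<bar>"])
  show "AE x in M. norm (f x) \<le> max \<bar>a\<bar> \<bar>b\<bar>"
  proof (rule AE_I2)
    fix x assume "x \<in> space M"
    with assms(2) have "a \<le> f x" "f x \<le> b" by auto
    then show "norm (f x) \<le> max \<bar>a\<bar> \<bar>b\<bar>" by (smt (verit) real_norm_def)
  qed
qed (rule assms(1))

lemma (in finite_measure) integrable_square_AE_bounded:
  fixes Y :: "'a \<Rightarrow> real"
  assumes "Y \<in> borel_measurable M" and "AE x in M. \<bar>Y x\<bar> \<le> c"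
  shows "integrable M (\<lambda>x. (Y x)\<^sup>2)"
proof (rule integrable_const_bound[where B="c\<^sup>2"])
  show "AE x in M. norm ((Y x)\<^sup>2) \<le> c\<^sup>2"
    using assms(2) by (rule eventually_mono) (metis abs_ge_zero power2_abs power_mono real_norm_def abs_power2)
qed (use assms(1) in measurable)

lemma (in prob_space) expectation_exp_le_Bernstein:
  fixes Y :: "'a \<Rightarrow> real"
  assumes Y: "Y \<in> borel_measurable M" and bound: "AE x in M. \<bar>Y x\<bar> \<le> c"
    and mean: "expectation Y = 0" and second_moment: "expectation (\<lambda>x. (Y x)\<^sup>2) = v"
    and "0 \<le> t" "t * c < 3"
  shows "expectation (\<lambda>x. exp (t * Y x)) \<le> 1 + t\<^sup>2 * v / (2 * (1 - t * c / 3))"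
proof -
  have "AE x in M. 0 \<le> c" using bound by (rule eventually_mono) auto
  then have "0 \<le> c" by simp
  define q where "q = t\<^sup>2 / (2 * (1 - t * c / 3))"
  have pointwise: "AE x in M. exp (t * Y x) \<le> 1 + t * Y x + q * (Y x)\<^sup>2"
  proof (rule eventually_mono[OF bound])
    fix x assume "\<bar>Y x\<bar> \<le> c"
    then have "t * Y x \<le> t * c" using \<open>0 \<le> t\<close> by (intro mult_left_mono) auto
    from exp_le_Bernstein[OF _ \<open>t * c < 3\<close> this] \<open>0 \<le> c\<close> \<open>0 \<le> t\<close>
    show "exp (t * Y x) \<le> 1 + t * Y x + q * (Y x)\<^sup>2"
      by (simp add: q_def power_mult_distrib)
  qed
  have int_Y: "integrable M Y"
    using bound Y by (intro integrable_const_bound[where B=c]) auto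
  have int_Y2: "integrable M (\<lambda>x. (Y x)\<^sup>2)"
    using Y bound by (rule integrable_square_AE_bounded)
  have int_exp: "integrable M (\<lambda>x. exp (t * Y x))"
  proof (rule integrable_const_bound[where B="exp (t * c)"])
    show "AE x in M. norm (exp (t * Y x)) \<le> exp (t * c)"
      using bound by (rule eventually_mono) (use \<open>0 \<le> t\<close> in \<open>auto intro: mult_left_mono\<close>)
  qed (use Y in measurable)
  have "expectation (\<lambda>x. exp (t * Y x)) \<le> expectation (\<lambda>x. 1 + t * Y x + q * (Y x)\<^sup>2)"
    using int_Y int_Y2 by (intro integral_mono_AE[OF int_exp _ pointwise]) auto
  also have "\<dots> = 1 + t * expectation Y + q * expectation (\<lambda>x. (Y x)\<^sup>2)"
    using int_Y int_Y2 by (simp add: prob_space)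
  finally show ?thesis by (simp add: mean second_moment q_def)
qed

lemma (in prob_space) expectation_exp_le_exp_Bernstein:
  fixes Y :: "'a \<Rightarrow> real"
  assumes Y: "Y \<in> borel_measurable M" and bound: "AE x in M. \<bar>Y x\<bar> \<le> c"
    and mean: "expectation Y = 0" and second_moment: "expectation (\<lambda>x. (Y x)\<^sup>2) = v"
    and "0 < \<epsilon>" and d: "0 < v + c * \<epsilon> / 3"
  shows "expectation (\<lambda>x. exp (\<epsilon> / (v + c * \<epsilon> / 3) * Y x)) \<le> exp (\<epsilon>\<^sup>2 / (2 * (v + c * \<epsilon> / 3)))"
proof (cases "v = 0")
  case True
  \<comment> \<open>Now the rate times c equals 3, out of reach of the quadratic bound; but Y vanishes a.e.\<close>
  have int_Y2: "integrable M (\<lambda>x. (Y x)\<^sup>2)"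
    using Y bound by (rule integrable_square_AE_bounded)
  have "AE x in M. (Y x)\<^sup>2 = 0"
    using integral_nonneg_eq_0_iff_AE[OF int_Y2] second_moment True by simp
  then have "AE x in M. exp (\<epsilon> / (v + c * \<epsilon> / 3) * Y x) = 1"
    by (rule eventually_mono) simp
  then have "expectation (\<lambda>x. exp (\<epsilon> / (v + c * \<epsilon> / 3) * Y x)) = expectation (\<lambda>x. 1)"
    using Y by (intro integral_cong_AE) auto
  then show ?thesis using d by (simp add: prob_space)
next
  case False
  define d where "d = v + c * \<epsilon> / 3"
  have "0 < d" using d by (simp add: d_def)
  have "0 \<le> v"
    using second_moment by (auto intro: Bochner_Integration.integral_nonneg)
  with False have "0 < v" by simp
  have "AE x in M. 0 \<le> c" using bound by (rule eventually_mono) auto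
  then have "0 \<le> c" by simp
  have "\<epsilon> / d * c < 3"
    using \<open>0 < v\<close> \<open>0 < \<epsilon>\<close> d by (simp add: d_def field_simps)
  from expectation_exp_le_Bernstein[OF Y bound mean second_moment _ this]
  have "expectation (\<lambda>x. exp (\<epsilon> / d * Y x)) \<le> 1 + (\<epsilon> / d)\<^sup>2 * v / (2 * (1 - \<epsilon> / d * c / 3))"
    using \<open>0 < \<epsilon>\<close> d by (simp add: d_def)
  also have "1 - \<epsilon> / d * c / 3 = v / d"
    using d by (simp add: d_def field_simps)
  also have "(\<epsilon> / d)\<^sup>2 * v / (2 * (v / d)) = \<epsilon>\<^sup>2 / (2 * d)"
    using \<open>0 < v\<close> \<open>0 < d\<close> by (simp add: field_simps power2_eq_square)
  also have "1 + \<epsilon>\<^sup>2 / (2 * d) \<le> exp (\<epsilon>\<^sup>2 / (2 * d))"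
    by (rule exp_ge_add_one_self)
  finally show ?thesis by (simp add: d_def)
qed

lemma (in prob_space) Chernoff_bound:
  fixes f :: "'a \<Rightarrow> real"
  assumes "f \<in> borel_measurable M" and "\<And>x. x \<in> space M \<Longrightarrow> f x \<le> B" and "0 < t"
  shows "prob {x \<in> space M. a \<le> f x} \<le> exp (- t * a) * expectation (\<lambda>x. exp (t * f x))"
proof -
  have "integrable M (\<lambda>x. exp (t * f x))"
  proof (rule integrable_bounded_real[where a=0 and b="exp (t * B)"])
    show "(\<lambda>x. exp (t * f x)) \<in> borel_measurable M" using assms(1) by measurable
    show "0 \<le> exp (t * f x) \<and> exp (t * f x) \<le> exp (t * B)" if "x \<in> space M" for x
      using assms(2)[OF that] \<open>0 < t\<close> by simp
  qed
  moreover from this have "set_integrable M (space M) (\<lambda>x. exp (t * f x))"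
    unfolding set_integrable_def by (intro integrable_mult_indicator) auto
  ultimately show ?thesis
    using Chernoff_ineq_ge[OF \<open>0 < t\<close> _ sets.top, where f=f and a=a] by (simp add: set_integral_space)
qed

section \<open>Hoelder and Finner inequalities\<close>

lemma weighted_AM_GM_slack:
  fixes x w :: "'i \<Rightarrow> real"
  assumes "finite B" and x: "\<And>i. i \<in> B \<Longrightarrow> 0 < x i"
    and w: "\<And>i. i \<in> B \<Longrightarrow> 0 \<le> w i" and "(\<Sum>i\<in>B. w i) \<le> 1"
  shows "(\<Prod>i\<in>B. x i powr w i) \<le> (\<Sum>i\<in>B. w i * x i) + (1 - (\<Sum>i\<in>B. w i))"
proof -
  \<comment> \<open>Convexity of exp at the points ln (x i) and 0 = ln 1, the latter carrying the missing weight.\<close>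
  define S where "S = insert None (Some ` B)"
  define a where "a j = (case j of None \<Rightarrow> 1 - (\<Sum>i\<in>B. w i) | Some i \<Rightarrow> w i)" for j
  define y where "y j = (case j of None \<Rightarrow> 0 | Some i \<Rightarrow> ln (x i))" for j
  have sum_S: "(\<Sum>j\<in>S. g j) = g None + (\<Sum>i\<in>B. g (Some i))" for g :: "'i option \<Rightarrow> real"
    using \<open>finite B\<close> by (simp add: S_def sum.reindex image_iff)
  have "exp (\<Sum>j\<in>S. a j *\<^sub>R y j) \<le> (\<Sum>j\<in>S. a j * exp (y j))"
  proof (rule convex_on_sum[OF _ _ exp_convex])
    show "finite S" "S \<noteq> {}" using \<open>finite B\<close> by (simp_all add: S_def)
    show "(\<Sum>j\<in>S. a j) = 1" by (simp add: sum_S a_def)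
    show "\<And>j. j \<in> S \<Longrightarrow> 0 \<le> a j" using assms by (auto simp: S_def a_def)
  qed auto
  moreover have "exp (\<Sum>j\<in>S. a j *\<^sub>R y j) = (\<Prod>i\<in>B. x i powr w i)"
    using \<open>finite B\<close> x by (auto simp: sum_S a_def y_def exp_sum powr_def mult.commute intro!: prod.cong)
      (metis less_irrefl)
  moreover have "(\<Sum>j\<in>S. a j * exp (y j)) = (\<Sum>i\<in>B. w i * x i) + (1 - (\<Sum>i\<in>B. w i))"
    using x by (simp add: sum_S a_def y_def)
  ultimately show ?thesis by simp
qed

lemma prod_powr_bounded:
  fixes f w :: "'i \<Rightarrow> real"
  assumes "\<And>i. i \<in> A \<Longrightarrow> a \<le> f i \<and> f i \<le> b" and "0 \<le> a" and "\<And>i. i \<in> A \<Longrightarrow> 0 \<le> w i"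
  shows "0 \<le> (\<Prod>i\<in>A. f i powr w i) \<and> (\<Prod>i\<in>A. f i powr w i) \<le> (\<Prod>i\<in>A. b powr w i)"
proof -
  have "0 \<le> f i" if "i \<in> A" for i using assms(1)[OF that] \<open>0 \<le> a\<close> by linarith
  then show ?thesis using assms by (auto intro!: prod_nonneg prod_mono powr_mono2)
qed

text \<open>A generalised Hoelder inequality. The positive lower bound \<open>a\<close> on the factors avoids the
  convention \<open>0 powr 0 = 0\<close> and lets us divide by the means.\<close>

lemma (in prob_space) expectation_prod_powr_le:
  fixes f :: "'i \<Rightarrow> 'a \<Rightarrow> real" and w :: "'i \<Rightarrow> real"
  assumes "finite B" and f: "\<And>i. i \<in> B \<Longrightarrow> f i \<in> borel_measurable M"
    and bound: "\<And>i x. i \<in> B \<Longrightarrow> x \<in> space M \<Longrightarrow> a \<le> f i x \<and> f i x \<le> b" and "0 < a"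
    and w: "\<And>i. i \<in> B \<Longrightarrow> 0 \<le> w i" and w_sum: "(\<Sum>i\<in>B. w i) \<le> 1"
  shows "expectation (\<lambda>x. \<Prod>i\<in>B. f i x powr w i) \<le> (\<Prod>i\<in>B. expectation (f i) powr w i)"
proof -
  have f_pos: "0 < f i x" if "i \<in> B" "x \<in> space M" for i x
    using bound[OF that] \<open>0 < a\<close> by linarith
  have int_f: "integrable M (f i)" if "i \<in> B" for i
    using f bound that by (intro integrable_bounded_real) auto
  define U where "U i = expectation (f i)" for i
  have U_pos: "0 < U i" if "i \<in> B" for i
  proof -
    have "a \<le> U i"
      unfolding U_def using int_f that bound by (intro integral_ge_const AE_I2) auto
    then show ?thesis using \<open>0 < a\<close> by linarith
  qed
  define P where "P = (\<Prod>i\<in>B. U i powr w i)"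
  have U_nonzero: "U i \<noteq> 0" if "i \<in> B" for i
    using U_pos[OF that] by simp
  have "0 < P" unfolding P_def using U_nonzero by (intro prod_pos) simp
  \<comment> \<open>AM-GM applied to the normalised values f i x / U i.\<close>
  have pointwise: "(\<Prod>i\<in>B. f i x powr w i) \<le> P * ((\<Sum>i\<in>B. w i * (f i x / U i)) + (1 - (\<Sum>i\<in>B. w i)))"
    if x: "x \<in> space M" for x
  proof -
    have "(\<Prod>i\<in>B. (f i x / U i) powr w i) = (\<Prod>i\<in>B. f i x powr w i) / P"
      unfolding P_def prod_dividef[symmetric] using f_pos[OF _ x] U_pos
      by (intro prod.cong refl powr_divide)
    then have "(\<Prod>i\<in>B. f i x powr w i) = P * (\<Prod>i\<in>B. (f i x / U i) powr w i)"
      using \<open>0 < P\<close> by simp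
    also have "\<dots> \<le> P * ((\<Sum>i\<in>B. w i * (f i x / U i)) + (1 - (\<Sum>i\<in>B. w i)))"
      using \<open>0 < P\<close> f_pos[OF _ x] U_pos
      by (intro mult_left_mono weighted_AM_GM_slack[OF \<open>finite B\<close> _ w w_sum]) auto
    finally show ?thesis .
  qed
  have "expectation (\<lambda>x. \<Prod>i\<in>B. f i x powr w i)
      \<le> expectation (\<lambda>x. P * ((\<Sum>i\<in>B. w i * (f i x / U i)) + (1 - (\<Sum>i\<in>B. w i))))"
  proof (rule integral_mono[OF _ _ pointwise])
    show "integrable M (\<lambda>x. \<Prod>i\<in>B. f i x powr w i)"
    proof (rule integrable_bounded_real)
      show "(\<lambda>x. \<Prod>i\<in>B. f i x powr w i) \<in> borel_measurable M" using f by measurable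
      show "0 \<le> (\<Prod>i\<in>B. f i x powr w i) \<and> (\<Prod>i\<in>B. f i x powr w i) \<le> (\<Prod>i\<in>B. b powr w i)"
        if "x \<in> space M" for x
        using bound[OF _ that] \<open>0 < a\<close> w by (intro prod_powr_bounded) auto
    qed
    show "integrable M (\<lambda>x. P * ((\<Sum>i\<in>B. w i * (f i x / U i)) + (1 - (\<Sum>i\<in>B. w i))))"
      using int_f by auto
  qed
  also have "\<dots> = P * ((\<Sum>i\<in>B. w i) + (1 - (\<Sum>i\<in>B. w i)))"
    using int_f U_nonzero by (simp add: integral_sum prob_space U_def cong: sum.cong)
  also have "\<dots> = P"
    by simp
  finally show ?thesis unfolding P_def U_def .
qed

lemma (in prob_space) expectation_powr_le:
  fixes f :: "'a \<Rightarrow> real"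
  assumes "f \<in> borel_measurable M" and "\<And>x. x \<in> space M \<Longrightarrow> a \<le> f x \<and> f x \<le> b" and "0 < a"
    and "0 \<le> u" "u \<le> 1"
  shows "expectation (\<lambda>x. f x powr u) \<le> expectation f powr u"
  using expectation_prod_powr_le[where B="{()}" and f="\<lambda>_. f" and w="\<lambda>_. u" and a=a and b=b] assms by simp

lemma (in prob_space) expectation_prod_powr_le_constant_factors:
  fixes f :: "'i \<Rightarrow> 'a \<Rightarrow> real" and w :: "'i \<Rightarrow> real"
  assumes "finite A" and "B \<subseteq> A" and f: "\<And>i. i \<in> A \<Longrightarrow> f i \<in> borel_measurable M"
    and bound: "\<And>i x. i \<in> A \<Longrightarrow> x \<in> space M \<Longrightarrow> a \<le> f i x \<and> f i x \<le> b" and "0 < a"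
    and const: "\<And>i x y. i \<in> A - B \<Longrightarrow> x \<in> space M \<Longrightarrow> y \<in> space M \<Longrightarrow> f i x = f i y"
    and w: "\<And>i. i \<in> A \<Longrightarrow> 0 \<le> w i" and w_sum: "(\<Sum>i\<in>B. w i) \<le> 1"
  shows "expectation (\<lambda>x. \<Prod>i\<in>A. f i x powr w i) \<le> (\<Prod>i\<in>A. expectation (f i) powr w i)"
proof -
  obtain x0 where x0: "x0 \<in> space M" using not_empty by blast
  define C where "C = (\<Prod>i\<in>A - B. f i x0 powr w i)"
  have split: "(\<Prod>i\<in>A. g i) = (\<Prod>i\<in>A - B. g i) * (\<Prod>i\<in>B. g i)" for g :: "'i \<Rightarrow> real"
    using \<open>finite A\<close> \<open>B \<subseteq> A\<close> by (metis prod.subset_diff)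
  have mean_constant: "expectation (f i) = f i x0" if "i \<in> A - B" for i
  proof -
    have "expectation (f i) = expectation (\<lambda>_. f i x0)"
      using const[OF that _ x0] by (intro Bochner_Integration.integral_cong) auto
    then show ?thesis by (simp add: prob_space)
  qed
  have "expectation (\<lambda>x. \<Prod>i\<in>A. f i x powr w i) = expectation (\<lambda>x. C * (\<Prod>i\<in>B. f i x powr w i))"
    unfolding split C_def using const[OF _ _ x0]
    by (intro Bochner_Integration.integral_cong refl arg_cong2[where f="(*)"] prod.cong) auto
  also have "\<dots> = C * expectation (\<lambda>x. \<Prod>i\<in>B. f i x powr w i)"
    by simp
  also have "\<dots> \<le> C * (\<Prod>i\<in>B. expectation (f i) powr w i)"
    using assms finite_subset[OF \<open>B \<subseteq> A\<close> \<open>finite A\<close>]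
    by (intro mult_left_mono expectation_prod_powr_le) (auto simp: C_def intro!: prod_nonneg)
  also have "\<dots> = (\<Prod>i\<in>A. expectation (f i) powr w i)"
    unfolding split C_def by (simp add: mean_constant)
  finally show ?thesis .
qed

lemma PiM_insert_section_integral:
  fixes F :: "('i \<Rightarrow> 'a) \<Rightarrow> real"
  assumes "finite I" "v \<notin> I" and P: "\<And>i. prob_space (P i)"
    and F: "F \<in> borel_measurable (PiM (insert v I) P)"
    and bound: "\<And>x. x \<in> space (PiM (insert v I) P) \<Longrightarrow> a \<le> F x \<and> F x \<le> b"
  shows section_measurable:
      "\<And>x. x \<in> space (PiM I P) \<Longrightarrow> (\<lambda>y. F (x(v := y))) \<in> borel_measurable (P v)"
    and section_integral_measurable:
      "(\<lambda>x. \<integral>y. F (x(v := y)) \<partial>P v) \<in> borel_measurable (PiM I P)"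
    and section_integral_bounds:
      "\<And>x. x \<in> space (PiM I P) \<Longrightarrow> a \<le> (\<integral>y. F (x(v := y)) \<partial>P v) \<and> (\<integral>y. F (x(v := y)) \<partial>P v) \<le> b"
    and integral_PiM_insert_section:
      "(\<integral>x. F x \<partial>PiM (insert v I) P) = (\<integral>x. (\<integral>y. F (x(v := y)) \<partial>P v) \<partial>PiM I P)"
proof -
  interpret product_sigma_finite P
    unfolding product_sigma_finite_def using P prob_space_imp_sigma_finite by blast
  interpret Pv: prob_space "P v" by (rule P)
  have update: "x(v := y) \<in> space (PiM (insert v I) P)" if "x \<in> space (PiM I P)" "y \<in> space (P v)" for x y
    using that by (auto simp: space_PiM PiE_iff extensional_def)
  show measurable_slice: "(\<lambda>y. F (x(v := y))) \<in> borel_measurable (P v)" if "x \<in> space (PiM I P)" for x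
    using measurable_comp[OF measurable_component_update[OF that \<open>v \<notin> I\<close>] F] by (simp add: comp_def)
  have "(\<lambda>(x, y). F (x(v := y))) \<in> borel_measurable (PiM I P \<Otimes>\<^sub>M P v)"
    using measurable_comp[OF measurable_add_dim F] by (simp add: comp_def case_prod_beta')
  then show "(\<lambda>x. \<integral>y. F (x(v := y)) \<partial>P v) \<in> borel_measurable (PiM I P)"
    by (rule sigma_finite_measure.borel_measurable_lebesgue_integral[OF prob_space_imp_sigma_finite[OF P]])
  show "a \<le> (\<integral>y. F (x(v := y)) \<partial>P v) \<and> (\<integral>y. F (x(v := y)) \<partial>P v) \<le> b"
    if "x \<in> space (PiM I P)" for x
  proof -
    have "integrable (P v) (\<lambda>y. F (x(v := y)))"
      using measurable_slice[OF that] bound[OF update[OF that]] by (intro Pv.integrable_bounded_real) auto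
    then show ?thesis
      using bound[OF update[OF that]]
      by (intro conjI Pv.integral_ge_const Pv.integral_le_const AE_I2) auto
  qed
  have "integrable (PiM (insert v I) P) F"
    using P F bound by (intro finite_measure.integrable_bounded_real prob_space.finite_measure prob_space_PiM) auto
  then show "(\<integral>x. F x \<partial>PiM (insert v I) P) = (\<integral>x. (\<integral>y. F (x(v := y)) \<partial>P v) \<partial>PiM I P)"
    by (rule product_integral_insert[OF \<open>finite I\<close> \<open>v \<notin> I\<close>])
qed

theorem Finner_inequality_PiM:
  fixes P :: "'i \<Rightarrow> 'a measure" and F :: "'j \<Rightarrow> ('i \<Rightarrow> 'a) \<Rightarrow> real"
    and E :: "'j \<Rightarrow> 'i set" and w :: "'j \<Rightarrow> real"
  assumes "finite I" and "finite A" and P: "\<And>i. prob_space (P i)"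
    and F: "\<And>j. j \<in> A \<Longrightarrow> F j \<in> borel_measurable (PiM I P)"
    and bound: "\<And>j x. j \<in> A \<Longrightarrow> x \<in> space (PiM I P) \<Longrightarrow> a \<le> F j x \<and> F j x \<le> b"
    and "0 < a"
    and depends: "\<And>j x y. j \<in> A \<Longrightarrow> x \<in> space (PiM I P) \<Longrightarrow> y \<in> space (PiM I P) \<Longrightarrow>
      (\<forall>i\<in>E j \<inter> I. x i = y i) \<Longrightarrow> F j x = F j y"
    and w: "\<And>j. j \<in> A \<Longrightarrow> 0 \<le> w j"
    and cover: "\<And>i. i \<in> I \<Longrightarrow> (\<Sum>j\<in>{j\<in>A. i \<in> E j}. w j) \<le> 1"
  shows "(\<integral>x. (\<Prod>j\<in>A. F j x powr w j) \<partial>PiM I P) \<le> (\<Prod>j\<in>A. (\<integral>x. F j x \<partial>PiM I P) powr w j)"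
  using \<open>finite I\<close> F bound depends cover
proof (induction I arbitrary: F rule: finite_induct)
  case empty
  interpret prob_space "PiM {} P" by (rule prob_space_PiM) (use P in auto)
  have "(\<integral>x. g x \<partial>PiM {} P) = g (\<lambda>_. undefined)" for g :: "('i \<Rightarrow> 'a) \<Rightarrow> real"
  proof -
    have "(\<integral>x. g x \<partial>PiM {} P) = (\<integral>x. g (\<lambda>_. undefined) \<partial>PiM {} P)"
      by (rule Bochner_Integration.integral_cong) (auto simp: space_PiM_empty)
    then show ?thesis by (simp add: prob_space)
  qed
  then show ?case by simp
next
  case (insert v I F)
  interpret Pv: prob_space "P v" by (rule P)
  have update: "x(v := y) \<in> space (PiM (insert v I) P)" if "x \<in> space (PiM I P)" "y \<in> space (P v)" for x y
    using that by (auto simp: space_PiM PiE_iff extensional_def)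
  define F' where "F' j x = (\<integral>y. F j (x(v := y)) \<partial>P v)" for j x
  have F'_measurable: "F' j \<in> borel_measurable (PiM I P)" if "j \<in> A" for j
    unfolding F'_def using that insert.prems(1,2) by (intro section_integral_measurable[OF insert.hyps P]) auto
  have F'_bound: "a \<le> F' j x \<and> F' j x \<le> b" if "j \<in> A" "x \<in> space (PiM I P)" for j x
    unfolding F'_def using that insert.prems(1,2) by (intro section_integral_bounds[OF insert.hyps P]) auto
  have F'_depends: "F' j x = F' j y"
    if "j \<in> A" "x \<in> space (PiM I P)" "y \<in> space (PiM I P)" "\<forall>i\<in>E j \<inter> I. x i = y i" for j x y
    unfolding F'_def
  proof (rule Bochner_Integration.integral_cong[OF refl])
    fix z assume z: "z \<in> space (P v)"
    show "F j (x(v := z)) = F j (y(v := z))"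
      by (rule insert.prems(3)[OF that(1) update[OF that(2) z] update[OF that(3) z]]) (use that(4) in auto)
  qed
  define G where "G x = (\<Prod>j\<in>A. F j x powr w j)" for x
  have G_bound: "0 \<le> G x \<and> G x \<le> (\<Prod>j\<in>A. b powr w j)" if "x \<in> space (PiM (insert v I) P)" for x
    unfolding G_def using insert.prems(2)[OF _ that] \<open>0 < a\<close> w by (intro prod_powr_bounded) auto
  have G_measurable: "G \<in> borel_measurable (PiM (insert v I) P)"
    unfolding G_def using insert.prems(1) by measurable
  \<comment> \<open>Integrating out coordinate v: only the factors containing v vary, and their weights sum to at most 1.\<close>
  have pointwise: "(\<integral>y. G (x(v := y)) \<partial>P v) \<le> (\<Prod>j\<in>A. F' j x powr w j)" if x: "x \<in> space (PiM I P)" for x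
    unfolding G_def F'_def
  proof (rule Pv.expectation_prod_powr_le_constant_factors[where B="{j\<in>A. v \<in> E j}"])
    show "finite A" "{j\<in>A. v \<in> E j} \<subseteq> A" "0 < a" using \<open>finite A\<close> \<open>0 < a\<close> by auto
    show "0 \<le> w j" if "j \<in> A" for j using w[OF that] .
    show "(\<lambda>y. F j (x(v := y))) \<in> borel_measurable (P v)" if "j \<in> A" for j
      using insert.prems(1,2)[OF that] x by (rule section_measurable[OF insert.hyps P])
    show "a \<le> F j (x(v := y)) \<and> F j (x(v := y)) \<le> b" if "j \<in> A" "y \<in> space (P v)" for j y
      using insert.prems(2)[OF that(1) update[OF x that(2)]] .
    show "F j (x(v := y)) = F j (x(v := y'))"
      if "j \<in> A - {j\<in>A. v \<in> E j}" "y \<in> space (P v)" "y' \<in> space (P v)" for j y y'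
    proof (rule insert.prems(3)[OF _ update[OF x that(2)] update[OF x that(3)]])
      show "j \<in> A" "\<forall>i\<in>E j \<inter> insert v I. (x(v := y)) i = (x(v := y')) i"
        using that(1) by auto
    qed
    show "(\<Sum>j\<in>{j\<in>A. v \<in> E j}. w j) \<le> 1"
      by (rule insert.prems(4)) simp
  qed
  interpret R: prob_space "PiM I P" by (rule prob_space_PiM) (use P in auto)
  have "(\<integral>x. G x \<partial>PiM (insert v I) P) = (\<integral>x. (\<integral>y. G (x(v := y)) \<partial>P v) \<partial>PiM I P)"
    by (rule integral_PiM_insert_section[OF insert.hyps P G_measurable G_bound])
  also have "\<dots> \<le> (\<integral>x. (\<Prod>j\<in>A. F' j x powr w j) \<partial>PiM I P)"
  proof (rule integral_mono[OF _ _ pointwise])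
    show "integrable (PiM I P) (\<lambda>x. \<integral>y. G (x(v := y)) \<partial>P v)"
      using section_integral_measurable[OF insert.hyps P G_measurable G_bound]
        section_integral_bounds[OF insert.hyps P G_measurable G_bound]
      by (rule R.integrable_bounded_real)
    show "integrable (PiM I P) (\<lambda>x. \<Prod>j\<in>A. F' j x powr w j)"
    proof (rule R.integrable_bounded_real)
      show "(\<lambda>x. \<Prod>j\<in>A. F' j x powr w j) \<in> borel_measurable (PiM I P)"
        using F'_measurable by measurable
      show "0 \<le> (\<Prod>j\<in>A. F' j x powr w j) \<and> (\<Prod>j\<in>A. F' j x powr w j) \<le> (\<Prod>j\<in>A. b powr w j)"
        if "x \<in> space (PiM I P)" for x
        using F'_bound[OF _ that] \<open>0 < a\<close> w by (intro prod_powr_bounded) auto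
    qed
  qed
  also have "\<dots> \<le> (\<Prod>j\<in>A. (\<integral>x. F' j x \<partial>PiM I P) powr w j)"
  proof (rule insert.IH[OF F'_measurable F'_bound F'_depends])
    show "(\<Sum>j\<in>{j\<in>A. i \<in> E j}. w j) \<le> 1" if "i \<in> I" for i
      using that by (intro insert.prems(4)) simp
  qed
  also have "\<dots> = (\<Prod>j\<in>A. (\<integral>x. F j x \<partial>PiM (insert v I) P) powr w j)"
  proof (rule prod.cong[OF refl])
    fix j assume "j \<in> A"
    show "(\<integral>x. F' j x \<partial>PiM I P) powr w j = (\<integral>x. F j x \<partial>PiM (insert v I) P) powr w j"
      using integral_PiM_insert_section[OF insert.hyps P insert.prems(1,2)[OF \<open>j \<in> A\<close>]]
      by (simp add: F'_def fun_upd_def)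
  qed
  finally show ?case unfolding G_def .
qed

section \<open>Kernels into product measures\<close>

lemma measurable_PiM_prob_algebra:
  fixes N :: "'i \<Rightarrow> 'a \<Rightarrow> 'b measure"
  assumes "finite I" and N: "\<And>i. i \<in> I \<Longrightarrow> N i \<in> L \<rightarrow>\<^sub>M prob_algebra B"
  shows "(\<lambda>x. PiM I (\<lambda>i. N i x)) \<in> L \<rightarrow>\<^sub>M prob_algebra (PiM I (\<lambda>_. B))"
  \<comment> \<open>Boxes generate the product \<sigma>-algebra, and on a box the product measure factorises.\<close>
proof (rule measurable_prob_algebra_generated[OF sets_PiM Int_stable_prod_algebra prod_algebra_sets_into_space])
  fix x assume x: "x \<in> space L"
  have Nx: "prob_space (N i x) \<and> sets (N i x) = sets B" if "i \<in> I" for i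
    using measurable_space[OF N[OF that] x] by (simp add: space_prob_algebra)
  show "prob_space (PiM I (\<lambda>i. N i x))" by (rule prob_space_PiM) (use Nx in auto)
  show "sets (PiM I (\<lambda>i. N i x)) = sets (PiM I (\<lambda>_. B))" by (rule sets_PiM_cong) (use Nx in auto)
next
  fix A assume "A \<in> prod_algebra I (\<lambda>_. B)"
  then obtain E where A: "A = Pi\<^sub>E I E" and E: "E \<in> (\<Pi> i\<in>I. sets B)"
    by (rule prod_algebraE_all)
  have box: "emeasure (PiM I (\<lambda>i. N i x)) A = (\<Prod>i\<in>I. emeasure (N i x) (E i))" if x: "x \<in> space L" for x
  proof -
    define M where "M i = (if i \<in> I then N i x else null_measure B)" for i
    have Nx: "prob_space (N i x) \<and> sets (N i x) = sets B" if "i \<in> I" for i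
      using measurable_space[OF N[OF that] x] by (simp add: space_prob_algebra)
    interpret product_sigma_finite M
      unfolding product_sigma_finite_def M_def
      using Nx by (auto intro: prob_space_imp_sigma_finite finite_measure.sigma_finite_measure
          simp: finite_measureI)
    have "PiM I (\<lambda>i. N i x) = PiM I M" by (rule PiM_cong) (auto simp: M_def)
    moreover have "emeasure (PiM I M) (Pi\<^sub>E I E) = (\<Prod>i\<in>I. emeasure (M i) (E i))"
      by (rule emeasure_PiM[OF \<open>finite I\<close>]) (use E Nx in \<open>auto simp: M_def\<close>)
    ultimately show ?thesis by (simp add: A M_def)
  qed
  have "(\<lambda>x. \<Prod>i\<in>I. emeasure (N i x) (E i)) \<in> borel_measurable L"
  proof (rule borel_measurable_prod_ennreal)
    fix i assume "i \<in> I"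
    with E show "(\<lambda>x. emeasure (N i x) (E i)) \<in> borel_measurable L"
      by (intro measurable_emeasure_kernel[OF measurable_prob_algebraD[OF N]]) auto
  qed
  then show "(\<lambda>x. emeasure (PiM I (\<lambda>i. N i x)) A) \<in> borel_measurable L"
    by (rule measurable_cong[THEN iffD1, rotated]) (use box in auto)
qed

lemma integrable_integral_prob_algebra:
  fixes f :: "'b \<Rightarrow> real"
  assumes "prob_space M" and N: "N \<in> M \<rightarrow>\<^sub>M prob_algebra B" and f: "f \<in> borel_measurable B"
    and bound: "\<And>y. y \<in> space B \<Longrightarrow> \<bar>f y\<bar> \<le> c"
  shows "integrable M (\<lambda>x. \<integral>y. f y \<partial>N x)"
proof (rule finite_measure.integrable_const_bound[OF prob_space.finite_measure[OF \<open>prob_space M\<close>]])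
  show "AE x in M. norm (\<integral>y. f y \<partial>N x) \<le> c"
  proof (rule AE_I2)
    fix x assume "x \<in> space M"
    then have "prob_space (N x)" and sets_N: "sets (N x) = sets B"
      using measurable_space[OF N] by (auto simp: space_prob_algebra)
    interpret Nx: prob_space "N x" by fact
    have bound_N: "\<bar>f y\<bar> \<le> c" if "y \<in> space (N x)" for y
      using bound sets_eq_imp_space_eq[OF sets_N] that by simp
    have "integrable (N x) (\<lambda>y. \<bar>f y\<bar>)"
      using f bound_N sets_N by (intro Nx.integrable_const_bound[where B=c] AE_I2) (auto cong: measurable_cong_sets)
    then show "norm (\<integral>y. f y \<partial>N x) \<le> c"
      using bound_N by (intro order_trans[OF integral_norm_bound] Nx.integral_le_const AE_I2) auto
  qed
  show "(\<lambda>x. \<integral>y. f y \<partial>N x) \<in> borel_measurable M"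
    using measurable_comp[OF measurable_prob_algebraD[OF N] integral_measurable_subprob_algebra[OF f]]
    by (simp add: comp_def)
qed

lemma integral_bind_prob_algebra:
  fixes f :: "'b \<Rightarrow> real"
  assumes "prob_space M" and N: "N \<in> M \<rightarrow>\<^sub>M prob_algebra B" and f: "f \<in> borel_measurable B"
    and bound: "\<And>y. y \<in> space B \<Longrightarrow> \<bar>f y\<bar> \<le> c"
  shows "(\<integral>y. f y \<partial>(M \<bind> N)) = (\<integral>x. (\<integral>y. f y \<partial>N x) \<partial>M)"
proof (rule integral_bind[OF f bound measurable_prob_algebraD[OF N]])
  show "finite_measure M" using \<open>prob_space M\<close> by (rule prob_space.finite_measure)
  show "AE x in M. emeasure (N x) (space (N x)) \<le> ennreal 1"
    using measurable_space[OF N] by (intro AE_I2) (auto simp: space_prob_algebra prob_space.emeasure_space_1)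
qed

section \<open>Networked samples\<close>

context
  fixes k n :: nat and V :: "nat \<Rightarrow> 'v set" and e :: "nat \<Rightarrow> nat \<Rightarrow> 'v"
    and \<rho>j :: "nat \<Rightarrow> 'x measure" and K :: "(nat \<Rightarrow> 'x) \<Rightarrow> real measure"
  assumes hypergraph: "k_partite_hypergraph k V n e"
    and prob_space_\<rho>j: "\<And>j. j < k \<Longrightarrow> prob_space (\<rho>j j)"
    and K: "K \<in> X_space k \<rho>j \<rightarrow>\<^sub>M prob_algebra borel"
begin

abbreviation feature_law where
  "feature_law \<equiv> PiM (SIGMA j:{..<k}. V j) (\<lambda>(j, v). \<rho>j j)"

abbreviation label_kernel where
  "label_kernel x \<equiv> distr (K x) (Z_space k \<rho>j) (\<lambda>y. (x, y))"

abbreviation sample_kernel where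
  "sample_kernel \<phi> \<equiv> PiM {..<n} (\<lambda>i. label_kernel (edge_features k e \<phi> i))"

lemma edge_in_part: "i < n \<Longrightarrow> j < k \<Longrightarrow> e i j \<in> V j"
  using hypergraph unfolding k_partite_hypergraph_def by auto

lemma prob_space_X_space: "prob_space (X_space k \<rho>j)"
  unfolding X_space_def by (rule prob_space_PiM) (use prob_space_\<rho>j in auto)

lemma prob_space_feature_law: "prob_space feature_law"
  by (rule prob_space_PiM) (use prob_space_\<rho>j in auto)

lemma measurable_label_kernel: "label_kernel \<in> X_space k \<rho>j \<rightarrow>\<^sub>M prob_algebra (Z_space k \<rho>j)"
  by (rule measurable_distr_prob_space2[OF K]) (simp add: Z_space_def case_prod_beta')

lemma prob_space_label_kernel: "x \<in> space (X_space k \<rho>j) \<Longrightarrow> prob_space (label_kernel x)"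
  using measurable_space[OF measurable_label_kernel] by (simp add: space_prob_algebra)

lemma prob_space_rho_joint: "prob_space (rho_joint k \<rho>j K)"
  unfolding rho_joint_def
  by (rule prob_space_bind'[OF _ measurable_label_kernel]) (simp add: space_prob_algebra prob_space_X_space)

lemma sets_rho_joint: "sets (rho_joint k \<rho>j K) = sets (Z_space k \<rho>j)"
  unfolding rho_joint_def
  by (rule sets_bind'[OF _ measurable_label_kernel]) (simp add: space_prob_algebra prob_space_X_space)

lemma measurable_edge_features:
  "i < n \<Longrightarrow> (\<lambda>\<phi>. edge_features k e \<phi> i) \<in> feature_law \<rightarrow>\<^sub>M X_space k \<rho>j"
  unfolding edge_features_def X_space_def
proof (rule measurable_restrict)
  fix j assume "i < n" "j \<in> {..<k}"
  then have "(j, e i j) \<in> (SIGMA j:{..<k}. V j)" using edge_in_part by auto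
  from measurable_component_singleton[OF this, of "\<lambda>(j, v). \<rho>j j"]
  show "(\<lambda>\<phi>. \<phi> (j, e i j)) \<in> feature_law \<rightarrow>\<^sub>M \<rho>j j" by simp
qed

lemma edge_features_in_space:
  "i < n \<Longrightarrow> \<phi> \<in> space feature_law \<Longrightarrow> edge_features k e \<phi> i \<in> space (X_space k \<rho>j)"
  using measurable_space[OF measurable_edge_features] by blast

text \<open>The k vertices of a hyperedge are distinct, so its feature vector has law \<open>X_space\<close>.\<close>

lemma distr_edge_features:
  assumes "i < n"
  shows "distr feature_law (X_space k \<rho>j) (\<lambda>\<phi>. edge_features k e \<phi> i) = X_space k \<rho>j"
proof -
  have "distr feature_law (\<Pi>\<^sub>M j\<in>{..<k}. (\<lambda>(j, v). \<rho>j j) (j, e i j))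
      (\<lambda>\<phi>. \<lambda>j\<in>{..<k}. \<phi> (j, e i j)) = (\<Pi>\<^sub>M j\<in>{..<k}. (\<lambda>(j, v). \<rho>j j) (j, e i j))"
    by (rule distr_PiM_reindex) (use prob_space_\<rho>j edge_in_part[OF assms] in \<open>auto simp: inj_on_def\<close>)
  then show ?thesis unfolding X_space_def edge_features_def by simp
qed

lemma measurable_sample_kernel:
  "sample_kernel \<in> feature_law \<rightarrow>\<^sub>M prob_algebra (PiM {..<n} (\<lambda>_. Z_space k \<rho>j))"
  using measurable_comp[OF measurable_edge_features measurable_label_kernel]
  by (intro measurable_PiM_prob_algebra) (auto simp: comp_def)

lemma prob_space_networked_sample_law: "prob_space (networked_sample_law k V n e \<rho>j K)"
  unfolding networked_sample_law_def
  by (rule prob_space_bind'[OF _ measurable_sample_kernel]) (simp add: space_prob_algebra prob_space_feature_law)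

lemma sets_networked_sample_law:
  "sets (networked_sample_law k V n e \<rho>j K) = sets (PiM {..<n} (\<lambda>_. Z_space k \<rho>j))"
  unfolding networked_sample_law_def
  by (rule sets_bind'[OF _ measurable_sample_kernel]) (simp add: space_prob_algebra prob_space_feature_law)

lemma measurable_networked_weighted_sum:
  fixes f :: "(nat \<Rightarrow> 'x) \<times> real \<Rightarrow> real" and w :: "nat \<Rightarrow> real"
  assumes "f \<in> borel_measurable (Z_space k \<rho>j)"
  shows "(\<lambda>zs. \<Sum>i<n. w i * f (zs i)) \<in> borel_measurable (networked_sample_law k V n e \<rho>j K)"
proof -
  have "(\<lambda>zs. \<Sum>i<n. w i * f (zs i)) \<in> borel_measurable (PiM {..<n} (\<lambda>_. Z_space k \<rho>j))"
    using assms by measurable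
  then show ?thesis using sets_networked_sample_law by (simp cong: measurable_cong_sets)
qed

lemma AE_networked_sample_law:
  assumes Q: "Measurable.pred (Z_space k \<rho>j) Q" and AE_Q: "AE z in rho_joint k \<rho>j K. Q z"
  shows "AE zs in networked_sample_law k V n e \<rho>j K. \<forall>i<n. Q (zs i)"
proof -
  have AE_X: "AE x in X_space k \<rho>j. AE z in label_kernel x. Q z"
    using AE_Q unfolding rho_joint_def
    by (subst (asm) AE_bind[OF measurable_prob_algebraD[OF measurable_label_kernel] Q])
  have "AE \<phi> in feature_law. AE zs in sample_kernel \<phi>. Q (zs i)" if "i < n" for i
  proof -
    have "AE x in distr feature_law (X_space k \<rho>j) (\<lambda>\<phi>. edge_features k e \<phi> i). AE z in label_kernel x. Q z"
      unfolding distr_edge_features[OF that] by (rule AE_X)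
    from AE_distrD[OF measurable_edge_features[OF that] this]
    have "AE \<phi> in feature_law. AE z in label_kernel (edge_features k e \<phi> i). Q z" .
    moreover have "AE \<phi> in feature_law.
        (AE z in label_kernel (edge_features k e \<phi> i). Q z) \<longrightarrow> (AE zs in sample_kernel \<phi>. Q (zs i))"
    proof (rule AE_I2, rule impI)
      fix \<phi> assume "\<phi> \<in> space feature_law" "AE z in label_kernel (edge_features k e \<phi> i). Q z"
      with that show "AE zs in sample_kernel \<phi>. Q (zs i)"
        using edge_features_in_space prob_space_label_kernel
        by (intro AE_PiM_component[where M="\<lambda>i. label_kernel (edge_features k e \<phi> i)"]) auto
    qed
    ultimately show ?thesis by (rule AE_mp)
  qed
  then have "AE \<phi> in feature_law. \<forall>i\<in>{..<n}. AE zs in sample_kernel \<phi>. Q (zs i)"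
    by (intro AE_finite_allI) auto
  then have "AE \<phi> in feature_law. AE zs in sample_kernel \<phi>. \<forall>i\<in>{..<n}. Q (zs i)"
    by (simp add: AE_finite_all)
  moreover have "Measurable.pred (PiM {..<n} (\<lambda>_. Z_space k \<rho>j)) (\<lambda>zs. \<forall>i\<in>{..<n}. Q (zs i))"
    using Q by measurable
  ultimately have "AE zs in networked_sample_law k V n e \<rho>j K. \<forall>i\<in>{..<n}. Q (zs i)"
    unfolding networked_sample_law_def
    by (subst AE_bind[OF measurable_prob_algebraD[OF measurable_sample_kernel]])
  then show ?thesis by (rule eventually_mono) simp
qed

lemma feasible_weighting_le_1:
  assumes "1 \<le> k" and "feasible_weighting k V n e w" and "i < n"
  shows "w i \<le> 1"
proof -
  have "w i \<le> (\<Sum>i'\<in>{i'. i' < n \<and> e i' 0 = e i 0}. w i')"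
    using assms by (intro member_le_sum) (auto simp: feasible_weighting_def)
  also have "\<dots> \<le> 1"
    using assms edge_in_part[OF \<open>i < n\<close>, of 0] by (auto simp: feasible_weighting_def)
  finally show ?thesis .
qed

text \<open>Finner's inequality on the feature space: hyperedge i sees the vertices (j, e i j), and
  feasibility of w is exactly the covering condition.\<close>

lemma feature_law_integral_prod_powr_le:
  fixes h :: "(nat \<Rightarrow> 'x) \<Rightarrow> real"
  assumes "feasible_weighting k V n e w" and h: "h \<in> borel_measurable (X_space k \<rho>j)"
    and bound: "\<And>x. x \<in> space (X_space k \<rho>j) \<Longrightarrow> a \<le> h x \<and> h x \<le> b" and "0 < a"
  shows "(\<integral>\<phi>. (\<Prod>i<n. h (edge_features k e \<phi> i) powr w i) \<partial>feature_law)
    \<le> (\<integral>x. h x \<partial>X_space k \<rho>j) powr (\<Sum>i<n. w i)"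
proof -
  \<comment> \<open>Finner's inequality wants probability spaces at every index, also off the vertex set.\<close>
  define P :: "nat \<times> 'v \<Rightarrow> 'x measure"
    where "P u = (if fst u < k then \<rho>j (fst u) else return (count_space UNIV) undefined)" for u
  have feature_law_eq: "PiM (SIGMA j:{..<k}. V j) P = feature_law"
    by (rule PiM_cong) (auto simp: P_def)
  have h_edge: "(\<lambda>\<phi>. h (edge_features k e \<phi> i)) \<in> borel_measurable feature_law" if "i < n" for i
    using measurable_comp[OF measurable_edge_features[OF that] h] by (simp add: comp_def)
  have mean_edge: "(\<integral>\<phi>. h (edge_features k e \<phi> i) \<partial>feature_law) = (\<integral>x. h x \<partial>X_space k \<rho>j)"
    if "i < n" for i
    using integral_distr[OF measurable_edge_features[OF that] h] by (simp add: distr_edge_features[OF that])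
  have "(\<integral>\<phi>. (\<Prod>i\<in>{..<n}. h (edge_features k e \<phi> i) powr w i) \<partial>PiM (SIGMA j:{..<k}. V j) P)
      \<le> (\<Prod>i\<in>{..<n}. (\<integral>\<phi>. h (edge_features k e \<phi> i) \<partial>PiM (SIGMA j:{..<k}. V j) P) powr w i)"
  proof (rule Finner_inequality_PiM[where E="\<lambda>i. (\<lambda>j. (j, e i j)) ` {..<k}"])
    show "finite (SIGMA j:{..<k}. V j)"
      using hypergraph unfolding k_partite_hypergraph_def by auto
    show "prob_space (P u)" for u
      by (cases "fst u < k") (auto simp: P_def prob_space_\<rho>j intro: prob_space_return)
    show "(\<Sum>i\<in>{i \<in> {..<n}. u \<in> (\<lambda>j. (j, e i j)) ` {..<k}}. w i) \<le> 1"
      if u_vertex: "u \<in> (SIGMA j:{..<k}. V j)" for u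
    proof -
      obtain j v where u: "u = (j, v)" "j < k" "v \<in> V j" using u_vertex by auto
      then have "{i \<in> {..<n}. u \<in> (\<lambda>j. (j, e i j)) ` {..<k}} = {i. i < n \<and> e i j = v}" by auto
      then show ?thesis using assms(1) u by (simp add: feasible_weighting_def)
    qed
    fix i assume "i \<in> {..<n}"
    then have "i < n" by simp
    show "(\<lambda>\<phi>. h (edge_features k e \<phi> i)) \<in> borel_measurable (PiM (SIGMA j:{..<k}. V j) P)"
      unfolding feature_law_eq using h_edge[OF \<open>i < n\<close>] .
    show "0 \<le> w i" using assms(1) \<open>i < n\<close> by (simp add: feasible_weighting_def)
    fix \<phi> assume \<phi>: "\<phi> \<in> space (PiM (SIGMA j:{..<k}. V j) P)"
    then show "a \<le> h (edge_features k e \<phi> i) \<and> h (edge_features k e \<phi> i) \<le> b"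
      unfolding feature_law_eq using bound edge_features_in_space[OF \<open>i < n\<close>] by blast
    fix \<psi> assume "\<psi> \<in> space (PiM (SIGMA j:{..<k}. V j) P)"
      and agree: "\<forall>u\<in>(\<lambda>j. (j, e i j)) ` {..<k} \<inter> (SIGMA j:{..<k}. V j). \<phi> u = \<psi> u"
    have "edge_features k e \<phi> i = edge_features k e \<psi> i"
      unfolding edge_features_def
      using agree edge_in_part[OF \<open>i < n\<close>] by (intro restrict_ext) auto
    then show "h (edge_features k e \<phi> i) = h (edge_features k e \<psi> i)" by simp
  qed (use \<open>0 < a\<close> in simp_all)
  also have "\<dots> = (\<Prod>i<n. (\<integral>x. h x \<partial>X_space k \<rho>j) powr w i)"
    unfolding feature_law_eq by (simp add: mean_edge)
  also have "\<dots> = (\<integral>x. h x \<partial>X_space k \<rho>j) powr (\<Sum>i<n. w i)"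
  proof -
    interpret X: prob_space "X_space k \<rho>j" by (rule prob_space_X_space)
    have "integrable (X_space k \<rho>j) h" using h bound by (rule X.integrable_bounded_real)
    then have "a \<le> (\<integral>x. h x \<partial>X_space k \<rho>j)" using bound by (intro X.integral_ge_const AE_I2) auto
    then show ?thesis using \<open>0 < a\<close> by (simp add: powr_sum)
  qed
  finally show ?thesis unfolding feature_law_eq .
qed

lemma sample_kernel_integral_prod_powr_le:
  fixes g :: "(nat \<Rightarrow> 'x) \<times> real \<Rightarrow> real"
  assumes \<phi>: "\<phi> \<in> space feature_law" and g: "g \<in> borel_measurable (Z_space k \<rho>j)"
    and bound: "\<And>z. a \<le> g z \<and> g z \<le> b" and "0 < a"
    and w: "\<And>i. i < n \<Longrightarrow> 0 \<le> w i \<and> w i \<le> 1"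
  shows "(\<integral>zs. (\<Prod>i<n. g (zs i) powr w i) \<partial>sample_kernel \<phi>)
    \<le> (\<Prod>i<n. (\<integral>z. g z \<partial>label_kernel (edge_features k e \<phi> i)) powr w i)"
proof -
  \<comment> \<open>Padding by null measures makes the family \<sigma>-finite at every index.\<close>
  define M where "M i = (if i < n then label_kernel (edge_features k e \<phi> i) else null_measure (Z_space k \<rho>j))" for i
  have prob_M: "prob_space (M i)" if "i < n" for i
    unfolding M_def using that \<phi> by (simp add: edge_features_in_space prob_space_label_kernel)
  have "sigma_finite_measure (M i)" for i
  proof (cases "i < n")
    case True
    then show ?thesis using prob_M prob_space_imp_sigma_finite by blast
  next
    case False
    then show ?thesis by (simp add: M_def finite_measure.sigma_finite_measure finite_measureI)
  qed
  then interpret product_sigma_finite M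
    unfolding product_sigma_finite_def by blast
  have g_M: "g \<in> borel_measurable (M i)" for i
    using g by (simp add: M_def)
  have sample_kernel_eq: "sample_kernel \<phi> = PiM {..<n} M" by (rule PiM_cong) (auto simp: M_def)
  have integrable_factor: "integrable (M i) (\<lambda>z. g z powr w i)" if "i \<in> {..<n}" for i
  proof (rule finite_measure.integrable_bounded_real[where a=0 and b="b powr w i"])
    show "finite_measure (M i)" using prob_M that by (simp add: prob_space.finite_measure)
    show "(\<lambda>z. g z powr w i) \<in> borel_measurable (M i)" using g_M by measurable
    show "0 \<le> g z powr w i \<and> g z powr w i \<le> b powr w i" for z
      using bound[of z] \<open>0 < a\<close> w that by (auto intro: powr_mono2)
  qed
  have "(\<integral>zs. (\<Prod>i<n. g (zs i) powr w i) \<partial>sample_kernel \<phi>) = (\<Prod>i<n. \<integral>z. g z powr w i \<partial>M i)"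
    unfolding sample_kernel_eq
    by (rule product_integral_prod[where f="\<lambda>i z. g z powr w i"]) (use integrable_factor in auto)
  also have "\<dots> \<le> (\<Prod>i<n. (\<integral>z. g z \<partial>M i) powr w i)"
  proof (rule prod_mono)
    fix i assume "i \<in> {..<n}"
    then have "i < n" by simp
    interpret Mi: prob_space "M i" by (rule prob_M[OF \<open>i < n\<close>])
    show "0 \<le> (\<integral>z. g z powr w i \<partial>M i) \<and> (\<integral>z. g z powr w i \<partial>M i) \<le> (\<integral>z. g z \<partial>M i) powr w i"
      using bound \<open>0 < a\<close> w[OF \<open>i < n\<close>] by (intro conjI Bochner_Integration.integral_nonneg Mi.expectation_powr_le g_M) auto
  qed
  finally show ?thesis by (simp add: M_def)
qed

lemma networked_integral_prod_powr_le:
  fixes g :: "(nat \<Rightarrow> 'x) \<times> real \<Rightarrow> real"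
  assumes "1 \<le> k" and feasible: "feasible_weighting k V n e w"
    and g: "g \<in> borel_measurable (Z_space k \<rho>j)" and bound: "\<And>z. a \<le> g z \<and> g z \<le> b" and "0 < a"
  shows "(\<integral>zs. (\<Prod>i<n. g (zs i) powr w i) \<partial>networked_sample_law k V n e \<rho>j K)
    \<le> (\<integral>z. g z \<partial>rho_joint k \<rho>j K) powr (\<Sum>i<n. w i)"
proof -
  have w: "0 \<le> w i \<and> w i \<le> 1" if "i < n" for i
    using feasible that feasible_weighting_le_1[OF \<open>1 \<le> k\<close> feasible that]
    by (simp add: feasible_weighting_def)
  have g_abs: "\<bar>g z\<bar> \<le> max \<bar>a\<bar> \<bar>b\<bar>" for z
    using bound[of z] by (smt (verit))
  define H where "H x = (\<integral>z. g z \<partial>label_kernel x)" for x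
  have H_measurable: "H \<in> borel_measurable (X_space k \<rho>j)"
    unfolding H_def
    using measurable_comp[OF measurable_prob_algebraD[OF measurable_label_kernel] integral_measurable_subprob_algebra[OF g]]
    by (simp add: comp_def)
  have H_bound: "a \<le> H x \<and> H x \<le> b" if "x \<in> space (X_space k \<rho>j)" for x
  proof -
    interpret prob_space "label_kernel x" using that by (rule prob_space_label_kernel)
    have "integrable (label_kernel x) g" using g bound by (intro integrable_bounded_real) auto
    then show ?thesis unfolding H_def using bound by (intro conjI integral_ge_const integral_le_const AE_I2) auto
  qed
  define f where "f zs = (\<Prod>i<n. g (zs i) powr w i)" for zs
  have f_measurable: "f \<in> borel_measurable (PiM {..<n} (\<lambda>_. Z_space k \<rho>j))"
    unfolding f_def using g by measurable
  have f_bound: "\<bar>f zs\<bar> \<le> (\<Prod>i<n. b powr w i)" for zs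
    unfolding f_def using prod_powr_bounded[where A="{..<n}" and f="\<lambda>i. g (zs i)" and a=a and b=b and w=w] bound \<open>0 < a\<close> w by auto
  have "(\<integral>zs. f zs \<partial>networked_sample_law k V n e \<rho>j K) = (\<integral>\<phi>. (\<integral>zs. f zs \<partial>sample_kernel \<phi>) \<partial>feature_law)"
    unfolding networked_sample_law_def using f_measurable f_bound
    by (rule integral_bind_prob_algebra[OF prob_space_feature_law measurable_sample_kernel])
  also have "\<dots> \<le> (\<integral>\<phi>. (\<Prod>i<n. H (edge_features k e \<phi> i) powr w i) \<partial>feature_law)"
  proof (rule integral_mono)
    show "integrable feature_law (\<lambda>\<phi>. \<integral>zs. f zs \<partial>sample_kernel \<phi>)"
      using f_measurable f_bound
      by (rule integrable_integral_prob_algebra[OF prob_space_feature_law measurable_sample_kernel])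
    show "integrable feature_law (\<lambda>\<phi>. \<Prod>i<n. H (edge_features k e \<phi> i) powr w i)"
    proof (rule finite_measure.integrable_bounded_real[OF prob_space.finite_measure[OF prob_space_feature_law]])
      show "(\<lambda>\<phi>. \<Prod>i<n. H (edge_features k e \<phi> i) powr w i) \<in> borel_measurable feature_law"
      proof (rule borel_measurable_prod)
        fix i assume "i \<in> {..<n}"
        then show "(\<lambda>\<phi>. H (edge_features k e \<phi> i) powr w i) \<in> borel_measurable feature_law"
          using measurable_comp[OF measurable_edge_features H_measurable] by (simp add: comp_def)
      qed
      show "0 \<le> (\<Prod>i<n. H (edge_features k e \<phi> i) powr w i) \<and> (\<Prod>i<n. H (edge_features k e \<phi> i) powr w i) \<le> (\<Prod>i<n. b powr w i)"
        if "\<phi> \<in> space feature_law" for \<phi>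
        using H_bound[OF edge_features_in_space[OF _ that]] \<open>0 < a\<close> w by (intro prod_powr_bounded) auto
    qed
    show "(\<integral>zs. f zs \<partial>sample_kernel \<phi>) \<le> (\<Prod>i<n. H (edge_features k e \<phi> i) powr w i)"
      if "\<phi> \<in> space feature_law" for \<phi>
      unfolding f_def H_def using that g bound \<open>0 < a\<close> w by (rule sample_kernel_integral_prod_powr_le)
  qed
  also have "\<dots> \<le> (\<integral>x. H x \<partial>X_space k \<rho>j) powr (\<Sum>i<n. w i)"
    using feasible H_measurable H_bound \<open>0 < a\<close> by (rule feature_law_integral_prod_powr_le)
  also have "(\<integral>x. H x \<partial>X_space k \<rho>j) = (\<integral>z. g z \<partial>rho_joint k \<rho>j K)"
    unfolding rho_joint_def H_def using g g_abs
    by (rule integral_bind_prob_algebra[OF prob_space_X_space measurable_label_kernel, symmetric])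
  finally show ?thesis unfolding f_def .
qed

lemma networked_integral_exp_weighted_sum_le:
  fixes Y :: "(nat \<Rightarrow> 'x) \<times> real \<Rightarrow> real"
  assumes "1 \<le> k" and feasible: "feasible_weighting k V n e w"
    and Y: "Y \<in> borel_measurable (Z_space k \<rho>j)" and bound: "\<And>z. \<bar>Y z\<bar> \<le> c" and "0 \<le> t"
  shows "(\<integral>zs. exp (t * (\<Sum>i<n. w i * Y (zs i))) \<partial>networked_sample_law k V n e \<rho>j K)
    \<le> (\<integral>z. exp (t * Y z) \<partial>rho_joint k \<rho>j K) powr (\<Sum>i<n. w i)"
proof -
  have "exp (t * (\<Sum>i<n. w i * Y (zs i))) = (\<Prod>i<n. exp (t * Y (zs i)) powr w i)" for zs
    by (simp add: sum_distrib_left exp_sum exp_powr_real mult_ac)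
  moreover have "(\<integral>zs. (\<Prod>i<n. exp (t * Y (zs i)) powr w i) \<partial>networked_sample_law k V n e \<rho>j K)
    \<le> (\<integral>z. exp (t * Y z) \<partial>rho_joint k \<rho>j K) powr (\<Sum>i<n. w i)"
  proof (rule networked_integral_prod_powr_le[OF \<open>1 \<le> k\<close> feasible])
    show "(\<lambda>z. exp (t * Y z)) \<in> borel_measurable (Z_space k \<rho>j)" using Y by measurable
    show "exp (- (t * c)) \<le> exp (t * Y z) \<and> exp (t * Y z) \<le> exp (t * c)" for z
    proof -
      have "- c \<le> Y z" "Y z \<le> c" using bound[of z] by linarith+
      then show ?thesis
        using mult_left_mono[of "- c" "Y z" t] mult_left_mono[of "Y z" c t] \<open>0 \<le> t\<close> by simp
    qed
  qed simp
  ultimately show ?thesis by simp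
qed

lemma networked_Bernstein_bounded:
  fixes Y :: "(nat \<Rightarrow> 'x) \<times> real \<Rightarrow> real"
  assumes "1 \<le> k" and feasible: "feasible_weighting k V n e w"
    and Y: "Y \<in> borel_measurable (Z_space k \<rho>j)" and bound: "\<And>z. \<bar>Y z\<bar> \<le> c"
    and mean: "(\<integral>z. Y z \<partial>rho_joint k \<rho>j K) = 0"
    and second_moment: "(\<integral>z. (Y z)\<^sup>2 \<partial>rho_joint k \<rho>j K) = v" and "0 < \<epsilon>"
  shows "measure (networked_sample_law k V n e \<rho>j K)
      {zs \<in> space (networked_sample_law k V n e \<rho>j K). (\<Sum>i<n. w i) * \<epsilon> \<le> (\<Sum>i<n. w i * Y (zs i))}
    \<le> exp (- ((\<Sum>i<n. w i) * \<epsilon>\<^sup>2 / (2 * (v + c * \<epsilon> / 3))))"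
proof -
  interpret \<rho>: prob_space "rho_joint k \<rho>j K" by (rule prob_space_rho_joint)
  interpret L: prob_space "networked_sample_law k V n e \<rho>j K" by (rule prob_space_networked_sample_law)
  define s where "s = (\<Sum>i<n. w i)"
  define d where "d = v + c * \<epsilon> / 3"
  have "0 \<le> c" using bound[of undefined] by linarith
  have "0 \<le> v" unfolding second_moment[symmetric] by (rule Bochner_Integration.integral_nonneg) simp
  have w: "0 \<le> w i" if "i < n" for i using feasible that by (simp add: feasible_weighting_def)
  then have "0 \<le> s" unfolding s_def by (intro sum_nonneg) simp
  show ?thesis
  proof (cases "d = 0")
    case True
    \<comment> \<open>Division by zero makes the bound exp 0 = 1.\<close>
    then show ?thesis by (simp add: d_def[symmetric] L.prob_le_1)
  next
    case False
    moreover have "0 \<le> d" using \<open>0 \<le> c\<close> \<open>0 \<le> v\<close> \<open>0 < \<epsilon>\<close> by (simp add: d_def)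
    ultimately have "0 < d" by simp
    define t where "t = \<epsilon> / d"
    have "0 < t" using \<open>0 < d\<close> \<open>0 < \<epsilon>\<close> by (simp add: t_def)
    have weighted_sum_le: "(\<Sum>i<n. w i * Y (zs i)) \<le> c * s" if "zs \<in> space (networked_sample_law k V n e \<rho>j K)" for zs
    proof -
      have "(\<Sum>i<n. w i * Y (zs i)) \<le> (\<Sum>i<n. w i * c)"
        using w bound by (intro sum_mono mult_left_mono) (auto simp: abs_le_iff)
      then show ?thesis by (simp add: s_def sum_distrib_left mult.commute)
    qed
    have "measure (networked_sample_law k V n e \<rho>j K)
        {zs \<in> space (networked_sample_law k V n e \<rho>j K). s * \<epsilon> \<le> (\<Sum>i<n. w i * Y (zs i))}
      \<le> exp (- t * (s * \<epsilon>)) *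
        (\<integral>zs. exp (t * (\<Sum>i<n. w i * Y (zs i))) \<partial>networked_sample_law k V n e \<rho>j K)"
      by (rule L.Chernoff_bound[OF measurable_networked_weighted_sum[OF Y] weighted_sum_le \<open>0 < t\<close>])
    also have "\<dots> \<le> exp (- t * (s * \<epsilon>)) * exp (\<epsilon>\<^sup>2 / (2 * d)) powr s"
    proof (rule mult_left_mono)
      have "(\<integral>zs. exp (t * (\<Sum>i<n. w i * Y (zs i))) \<partial>networked_sample_law k V n e \<rho>j K)
          \<le> (\<integral>z. exp (t * Y z) \<partial>rho_joint k \<rho>j K) powr s"
        unfolding s_def using \<open>0 < t\<close>
        by (intro networked_integral_exp_weighted_sum_le[OF \<open>1 \<le> k\<close> feasible Y bound]) simp
      also have "\<dots> \<le> exp (\<epsilon>\<^sup>2 / (2 * d)) powr s"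
      proof (rule powr_mono2[OF \<open>0 \<le> s\<close>])
        have "Y \<in> borel_measurable (rho_joint k \<rho>j K)"
          using Y sets_rho_joint by (simp cong: measurable_cong_sets)
        from \<rho>.expectation_exp_le_exp_Bernstein[OF this AE_I2[OF bound] mean second_moment \<open>0 < \<epsilon>\<close>]
        show "(\<integral>z. exp (t * Y z) \<partial>rho_joint k \<rho>j K) \<le> exp (\<epsilon>\<^sup>2 / (2 * d))"
          using \<open>0 < d\<close> by (simp add: t_def d_def)
      qed (simp add: Bochner_Integration.integral_nonneg)
      finally show "(\<integral>zs. exp (t * (\<Sum>i<n. w i * Y (zs i))) \<partial>networked_sample_law k V n e \<rho>j K)
          \<le> exp (\<epsilon>\<^sup>2 / (2 * d)) powr s" .
    qed simp
    also have "\<dots> = exp (- (s * \<epsilon>\<^sup>2 / (2 * d)))"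
      using \<open>0 < d\<close> by (simp add: exp_powr_real t_def power2_eq_square field_simps flip: exp_add)
    finally show ?thesis by (simp add: s_def d_def)
  qed
qed

text \<open>Truncating Y at level c changes it only on a null set of rho_joint, and hence only on a
  null set of sample paths.\<close>

lemma networked_Bernstein:
  fixes Y :: "(nat \<Rightarrow> 'x) \<times> real \<Rightarrow> real"
  assumes "1 \<le> k" and feasible: "feasible_weighting k V n e w"
    and Y: "Y \<in> borel_measurable (Z_space k \<rho>j)" and bound: "AE z in rho_joint k \<rho>j K. \<bar>Y z\<bar> \<le> c"
    and mean: "(\<integral>z. Y z \<partial>rho_joint k \<rho>j K) = 0"
    and second_moment: "(\<integral>z. (Y z)\<^sup>2 \<partial>rho_joint k \<rho>j K) = v" and "0 < \<epsilon>"
  shows "measure (networked_sample_law k V n e \<rho>j K)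
      {zs \<in> space (networked_sample_law k V n e \<rho>j K). (\<Sum>i<n. w i) * \<epsilon> \<le> (\<Sum>i<n. w i * Y (zs i))}
    \<le> exp (- ((\<Sum>i<n. w i) * \<epsilon>\<^sup>2 / (2 * (v + c * \<epsilon> / 3))))"
proof -
  interpret \<rho>: prob_space "rho_joint k \<rho>j K" by (rule prob_space_rho_joint)
  have "AE z in rho_joint k \<rho>j K. 0 \<le> c" using bound by (rule eventually_mono) simp
  then have "0 \<le> c" by simp
  define Y' where "Y' z = max (- c) (min c (Y z))" for z
  have Y': "Y' \<in> borel_measurable (Z_space k \<rho>j)" unfolding Y'_def using Y by measurable
  have Y'_\<rho>: "Y' \<in> borel_measurable (rho_joint k \<rho>j K)" and Y_\<rho>: "Y \<in> borel_measurable (rho_joint k \<rho>j K)"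
    using Y Y' sets_rho_joint by (simp_all cong: measurable_cong_sets)
  have AE_eq: "AE z in rho_joint k \<rho>j K. Y' z = Y z"
    using bound by (rule eventually_mono) (auto simp: Y'_def)
  have "measure (networked_sample_law k V n e \<rho>j K)
      {zs \<in> space (networked_sample_law k V n e \<rho>j K). (\<Sum>i<n. w i) * \<epsilon> \<le> (\<Sum>i<n. w i * Y (zs i))}
    = measure (networked_sample_law k V n e \<rho>j K)
      {zs \<in> space (networked_sample_law k V n e \<rho>j K). (\<Sum>i<n. w i) * \<epsilon> \<le> (\<Sum>i<n. w i * Y' (zs i))}"
  proof (rule measure_eq_AE)
    have "Measurable.pred (Z_space k \<rho>j) (\<lambda>z. Y' z = Y z)" using Y Y' by measurable
    from AE_networked_sample_law[OF this AE_eq]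
    show "AE zs in networked_sample_law k V n e \<rho>j K.
        zs \<in> {zs \<in> space (networked_sample_law k V n e \<rho>j K). (\<Sum>i<n. w i) * \<epsilon> \<le> (\<Sum>i<n. w i * Y (zs i))} \<longleftrightarrow>
        zs \<in> {zs \<in> space (networked_sample_law k V n e \<rho>j K). (\<Sum>i<n. w i) * \<epsilon> \<le> (\<Sum>i<n. w i * Y' (zs i))}"
      by (rule eventually_mono) simp
  qed (use measurable_networked_weighted_sum[OF Y] measurable_networked_weighted_sum[OF Y'] in measurable)
  also have "\<dots> \<le> exp (- ((\<Sum>i<n. w i) * \<epsilon>\<^sup>2 / (2 * (v + c * \<epsilon> / 3))))"
  proof (rule networked_Bernstein_bounded[OF \<open>1 \<le> k\<close> feasible Y' _ _ _ \<open>0 < \<epsilon>\<close>])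
    show "\<bar>Y' z\<bar> \<le> c" for z using \<open>0 \<le> c\<close> by (simp add: Y'_def)
    show "(\<integral>z. Y' z \<partial>rho_joint k \<rho>j K) = 0"
      using mean integral_cong_AE[OF Y'_\<rho> Y_\<rho> AE_eq] by simp
    show "(\<integral>z. (Y' z)\<^sup>2 \<partial>rho_joint k \<rho>j K) = v"
      using second_moment AE_eq Y'_\<rho> Y_\<rho> by (subst integral_cong_AE[where g="\<lambda>z. (Y z)\<^sup>2"]) (auto elim: eventually_mono)
  qed
  finally show ?thesis .
qed

end

lemma weighted_mean_deviation_ge_iff:
  fixes w x :: "'i \<Rightarrow> real"
  assumes "0 < (\<Sum>i\<in>I. w i)"
  shows "\<epsilon> \<le> 1 / (\<Sum>i\<in>I. w i) * (\<Sum>i\<in>I. w i * x i) - \<mu>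
    \<longleftrightarrow> (\<Sum>i\<in>I. w i) * \<epsilon> \<le> (\<Sum>i\<in>I. w i * (x i - \<mu>))"
proof -
  have weighted_deviation: "(\<Sum>i\<in>I. w i * (x i - \<mu>)) = (\<Sum>i\<in>I. w i * x i) - (\<Sum>i\<in>I. w i) * \<mu>"
    by (simp add: right_diff_distrib sum_subtractf sum_distrib_right)
  show ?thesis unfolding weighted_deviation using assms by (simp add: field_simps)
qed

lemma (in prob_space) integral_deviation_eq_0:
  fixes f :: "'a \<Rightarrow> real"
  assumes "f \<in> borel_measurable M" and "AE x in M. \<bar>f x - c\<bar> \<le> B" and "c = expectation f"
  shows "expectation (\<lambda>x. f x - c) = 0"
proof -
  have "integrable M (\<lambda>x. f x - c)"
    using assms(1,2) by (intro integrable_const_bound[where B=B]) auto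
  then have "integrable M f"
    using Bochner_Integration.integrable_add[of M "\<lambda>x. f x - c" "\<lambda>_. c"] by simp
  then show ?thesis by (simp add: prob_space assms(3)[symmetric])
qed

theorem theorem6:
  fixes k n :: nat
    and V :: "nat \<Rightarrow> 'v set"
    and e :: "nat \<Rightarrow> nat \<Rightarrow> 'v"
    and S :: "nat \<Rightarrow> 'x::metric_space set"
    and \<rho>j :: "nat \<Rightarrow> 'x measure"
    and K :: "(nat \<Rightarrow> 'x) \<Rightarrow> real measure"
    and \<xi> :: "(nat \<Rightarrow> 'x) \<times> real \<Rightarrow> real"
    and w :: "nat \<Rightarrow> real"
    and \<mu> \<sigma> M \<epsilon> :: real
  assumes "1 \<le> k"
    and "k_partite_hypergraph k V n e"
    and "\<And>j. j < k \<Longrightarrow> compact (S j)"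
    and "\<And>j. j < k \<Longrightarrow> sets (\<rho>j j) = sets (restrict_space borel (S j))"
    and "\<And>j. j < k \<Longrightarrow> prob_space (\<rho>j j)"
    and "K \<in> measurable (X_space k \<rho>j) (prob_algebra borel)"
    and "\<xi> \<in> borel_measurable (Z_space k \<rho>j)"
    and "\<mu> = (\<integral>z. \<xi> z \<partial>rho_joint k \<rho>j K)"
    and "\<sigma>\<^sup>2 = (\<integral>z. (\<xi> z - \<mu>)\<^sup>2 \<partial>rho_joint k \<rho>j K)"
    and "AE z in rho_joint k \<rho>j K. \<bar>\<xi> z - \<mu>\<bar> \<le> M"
    and "optimal_weighting k V n e w"
    and "\<epsilon> > 0"
  shows "measure (networked_sample_law k V n e \<rho>j K)
           {zs \<in> space (networked_sample_law k V n e \<rho>j K).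
              (1 / s_G k V n e) * (\<Sum>i<n. w i * \<xi> (zs i)) - \<mu> \<ge> \<epsilon>}
         \<le> exp (- (s_G k V n e * \<epsilon>\<^sup>2 / (2 * (\<sigma>\<^sup>2 + M * \<epsilon> / 3))))"
proof -
  note setting = assms(2,5,6)
  have feasible: "feasible_weighting k V n e w" and s_eq: "(\<Sum>i<n. w i) = s_G k V n e"
    using assms(11) by (auto simp: optimal_weighting_def)
  interpret L: prob_space "networked_sample_law k V n e \<rho>j K"
    by (rule prob_space_networked_sample_law[OF setting])
  show ?thesis
  proof (cases "s_G k V n e = 0")
    case True
    then show ?thesis by (simp add: L.prob_le_1)
  next
    case False
    moreover have "0 \<le> (\<Sum>i<n. w i)"
      using feasible by (intro sum_nonneg) (simp add: feasible_weighting_def)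
    ultimately have "0 < (\<Sum>i<n. w i)" by (simp add: s_eq)
    have centred_measurable: "(\<lambda>z. \<xi> z - \<mu>) \<in> borel_measurable (Z_space k \<rho>j)"
      using assms(7) by measurable
    have centred: "(\<integral>z. \<xi> z - \<mu> \<partial>rho_joint k \<rho>j K) = 0"
      using assms(7,8,10) sets_rho_joint[OF setting]
      by (intro prob_space.integral_deviation_eq_0[OF prob_space_rho_joint[OF setting]])
        (auto cong: measurable_cong_sets)
    show ?thesis
      unfolding s_eq[symmetric] weighted_mean_deviation_ge_iff[OF \<open>0 < (\<Sum>i<n. w i)\<close>]
      by (rule networked_Bernstein[OF setting assms(1) feasible centred_measurable assms(10) centred
            assms(9)[symmetric] assms(12)])
  qed
qed

end
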